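(* Let $n\ge1$ be fixed and let $f(\boldsymbol{X})$ be a probability density of the joint vector state $\boldsymbol{X}=(x_1,\dots,x_n)$ of $n$ targets, and let $g(\boldsymbol{X})=\mathcal{N}\{\boldsymbol{X};\boldsymbol{\mu},\boldsymbol{\Sigma}\}$ be a Gaussian density. Define $$J(g)=\min_{\tilde f}\ \int\tilde f(\boldsymbol{X})\log\frac{\tilde f(\boldsymbol{X})}{g(\boldsymbol{X})}\,\mathrm{d}\boldsymbol{X}\quad\text{subject to}\quad\sum_{\pi}\tilde f(\pi\boldsymbol{X})=\sum_{\pi}f(\pi\boldsymbol{X})\ \ \forall\boldsymbol{X},$$ the minimum being over probability densities $\tilde f$. Then $$J(g)=\frac{1}{n!}\int\Big[\sum_{\pi}f(\pi\boldsymbol{X})\Big]\log\frac{\sum_{\pi}f(\pi\boldsymbol{X})}{\sum_{\pi}g(\pi\boldsymbol{X})}\,\mathrm{d}\boldsymbol{X}.$$ Consequently, the problem of minimising $\int\tilde f\log(\tilde f/g)\,\mathrm{d}\boldsymbol{X}$ jointly over such $\tilde f$ and Gaussian $g$ is equivalent to minimising the right-hand side over Gaussian $g$.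
   Context: Sums over $\pi$ range over all $n!$ permutations of the $n$ single-target components, and $\pi\boldsymbol{X}$ denotes the vector $\boldsymbol{X}$ with its $n$ single-target components permuted according to $\pi$. *)

theory Defs
  imports "HOL-Analysis.Analysis" "HOL-Combinatorics.Permutations"
begin

text \<open>Joint state of n targets, each with a d-dimensional single-target state:
  a real vector indexed by pairs (k, i), k a coordinate of the single-target state,
  i the target index.  n = CARD('n), d = CARD('d).\<close>
type_synonym ('d, 'n) jstate = "real ^ ('d \<times> 'n)"

definition perm_act :: "('n \<Rightarrow> 'n) \<Rightarrow> ('d::finite, 'n::finite) jstate \<Rightarrow> ('d, 'n) jstate" where
  "perm_act \<pi> X = (\<chi> ki. X $ (fst ki, \<pi> (snd ki)))"

definition sym_sum :: "(('d::finite, 'n::finite) jstate \<Rightarrow> real) \<Rightarrow> ('d, 'n) jstate \<Rightarrow> real" where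
  "sym_sum f X = (\<Sum>\<pi> \<in> {\<pi>. \<pi> permutes (UNIV :: 'n set)}. f (perm_act \<pi> X))"

definition prob_density :: "('a::euclidean_space \<Rightarrow> real) \<Rightarrow> bool" where
  "prob_density p \<longleftrightarrow> p \<in> borel_measurable lborel \<and> (\<forall>x. 0 \<le> p x)
     \<and> (\<integral>\<^sup>+ x. ennreal (p x) \<partial>lborel) = 1"

definition cov_matrix :: "real ^ 'm ^ 'm \<Rightarrow> bool" where
  "cov_matrix S \<longleftrightarrow> transpose S = S \<and> (\<forall>v. v \<noteq> 0 \<longrightarrow> 0 < v \<bullet> (S *v v))"

definition gauss_density :: "real ^ 'm \<Rightarrow> real ^ 'm ^ 'm \<Rightarrow> real ^ 'm \<Rightarrow> real" where
  "gauss_density \<mu> S x =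
     (2 * pi) powr (- real CARD('m) / 2) * det S powr (- 1 / 2)
       * exp (- (1 / 2) * ((x - \<mu>) \<bullet> (matrix_inv S *v (x - \<mu>))))"

text \<open>The functional  int p log (p / q) dX, as an extended real
  (positive part minus negative part; the convention 0 log(0/q) = 0 holds
  since 0 * anything = 0).\<close>
definition rel_ent :: "('a::euclidean_space \<Rightarrow> real) \<Rightarrow> ('a \<Rightarrow> real) \<Rightarrow> ereal" where
  "rel_ent p q =
     enn2ereal (\<integral>\<^sup>+ x. ennreal (p x * ln (p x / q x)) \<partial>lborel)
   - enn2ereal (\<integral>\<^sup>+ x. ennreal (- (p x * ln (p x / q x))) \<partial>lborel)"

definition feasible :: "(('d::finite, 'n::finite) jstate \<Rightarrow> real) \<Rightarrow> (('d, 'n) jstate \<Rightarrow> real) \<Rightarrow> bool" where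
  "feasible f ft \<longleftrightarrow> prob_density ft \<and> (\<forall>X. sym_sum ft X = sym_sum f X)"

end

theory Submission
  imports Defs "HOL-Probability.Distributions"
begin

text \<open>
  The constraint only fixes the symmetrisation \<open>F = \<Sum>\<^sub>\<pi> f \<circ> \<pi>\<close>. Writing \<open>G = \<Sum>\<^sub>\<pi> g \<circ> \<pi>\<close>,
  the density \<open>T = F g / G\<close> is feasible, and for every feasible \<open>f\<^sup>~\<close>
  \<open>f\<^sup>~ log (f\<^sup>~/g) = f\<^sup>~ log (f\<^sup>~/T) + f\<^sup>~ log (F/G)\<close>.
  Since \<open>log (F/G)\<close> is permutation invariant and Lebesgue measure is invariant under
  permuting the targets, \<open>\<integral> f\<^sup>~ log (F/G) = (1/n!) \<integral> F log (F/G)\<close> for every feasible \<open>f\<^sup>~\<close>,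
  while \<open>\<integral> f\<^sup>~ log (f\<^sup>~/T) \<ge> \<integral> (f\<^sup>~ - T) = 0\<close> by Gibbs' inequality, with equality for \<open>f\<^sup>~ = T\<close>.
\<close>

section \<open>Permuting the targets\<close>

abbreviation perms :: "('n \<Rightarrow> 'n) set" where
  "perms \<equiv> {\<pi>. \<pi> permutes UNIV}"

lemma finite_perms: "finite (perms :: ('n::finite \<Rightarrow> 'n) set)"
  by (rule finite_permutations) auto

lemma card_perms: "card (perms :: ('n::finite \<Rightarrow> 'n) set) = fact CARD('n)"
  by (rule card_permutations) auto

lemma prod_inner_Basis_vec: "(\<Prod>b\<in>Basis. x \<bullet> b) = (\<Prod>i\<in>UNIV. x $ i)"
  for x :: "real ^ 'i::finite"
  by (simp add: Basis_vec_def cart_eq_inner_axis axis_eq_axis prod.UNION_disjoint)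

lemma lborel_distr_vec_reindex:
  fixes p :: "'i::finite \<Rightarrow> 'i"
  assumes p: "bij p"
  shows "distr lborel borel (\<lambda>X::real^'i. \<chi> i. X $ p i) = lborel"
proof (rule lborel_eqI[symmetric])
  let ?h = "\<lambda>X::real^'i. \<chi> i. X $ p i"
  have [measurable]: "?h \<in> borel \<rightarrow>\<^sub>M borel"
    by (intro borel_measurable_continuous_onI continuous_intros)
  fix l u :: "real^'i"
  assume le: "\<And>b. b \<in> Basis \<Longrightarrow> l \<bullet> b \<le> u \<bullet> b"
  have "l $ i \<le> u $ i" for i
    using le[of "axis i 1"] by (auto simp: cart_eq_inner_axis Basis_vec_def)
  then have le_inv: "(\<chi> j. l $ inv p j) \<bullet> b \<le> (\<chi> j. u $ inv p j) \<bullet> b" if "b \<in> Basis" for b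
    using that by (auto simp: Basis_vec_def cart_eq_inner_axis[symmetric] inner_axis)
  have preimage: "?h -` box l u = box (\<chi> j. l $ inv p j) (\<chi> j. u $ inv p j)"
    using p by (auto simp: mem_box_cart bij_inv_eq_iff) (metis bij_inv_eq_iff p)+
  have "emeasure (distr lborel borel ?h) (box l u)
      = emeasure lborel (box (\<chi> j. l $ inv p j) (\<chi> j. u $ inv p j))"
    by (simp add: emeasure_distr preimage)
  also have "\<dots> = (\<Prod>j\<in>UNIV. u $ inv p j - l $ inv p j)"
    using le_inv by (simp add: prod_inner_Basis_vec)
  also have "\<dots> = (\<Prod>i\<in>UNIV. u $ i - l $ i)"
    using prod.reindex_bij_betw[OF bij_betw_inv_into[OF p], of "\<lambda>i. u $ i - l $ i"] by simp
  also have "\<dots> = (\<Prod>b\<in>Basis. (u - l) \<bullet> b)"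
    by (simp add: prod_inner_Basis_vec)
  finally show "emeasure (distr lborel borel ?h) (box l u) = (\<Prod>b\<in>Basis. (u - l) \<bullet> b)" .
qed simp

lemma perm_act_eq_reindex: "perm_act \<pi> = (\<lambda>X. \<chi> j. X $ (\<lambda>(k, i). (k, \<pi> i)) j)"
  by (auto simp: perm_act_def fun_eq_iff split: prod.splits)

lemma measurable_perm_act [measurable]: "perm_act \<pi> \<in> borel \<rightarrow>\<^sub>M borel"
  unfolding perm_act_eq_reindex by (intro borel_measurable_continuous_onI continuous_intros)

lemma perm_act_perm_act: "perm_act \<pi> (perm_act \<sigma> X) = perm_act (\<sigma> \<circ> \<pi>) X"
  by (simp add: perm_act_def vec_eq_iff)

lemma nn_integral_perm_act:
  fixes u :: "('d::finite, 'n::finite) jstate \<Rightarrow> ennreal"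
  assumes \<pi>: "\<pi> permutes UNIV" and [measurable]: "u \<in> borel_measurable borel"
  shows "(\<integral>\<^sup>+X. u (perm_act \<pi> X) \<partial>lborel) = (\<integral>\<^sup>+X. u X \<partial>lborel)"
proof -
  have "bij (\<lambda>(k::'d, i). (k, \<pi> i))"
    by (rule o_bij[where g = "\<lambda>(k, i). (k, inv \<pi> i)"])
       (auto simp: fun_eq_iff permutes_inverses[OF \<pi>])
  then have "(\<integral>\<^sup>+X. u X \<partial>lborel) = (\<integral>\<^sup>+X. u X \<partial>distr lborel borel (perm_act \<pi>))"
    unfolding perm_act_eq_reindex by (simp add: lborel_distr_vec_reindex)
  also have "\<dots> = (\<integral>\<^sup>+X. u (perm_act \<pi> X) \<partial>lborel)"
    by (simp add: nn_integral_distr)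
  finally show ?thesis ..
qed

lemma sym_sum_perm_act:
  assumes "\<pi> permutes UNIV"
  shows "sym_sum h (perm_act \<pi> X) = sym_sum h X"
  unfolding sym_sum_def perm_act_perm_act
  using setum_permutations_compose_left[OF assms, of "\<lambda>\<sigma>. h (perm_act \<sigma> X)"] by simp

lemma borel_measurable_sym_sum [measurable]:
  "h \<in> borel_measurable borel \<Longrightarrow> sym_sum h \<in> borel_measurable borel"
  unfolding sym_sum_def
  by (intro borel_measurable_sum) (rule measurable_compose[OF measurable_perm_act])

lemma sym_sum_nonneg: "(\<And>X. 0 \<le> h X) \<Longrightarrow> 0 \<le> sym_sum h X"
  unfolding sym_sum_def by (intro sum_nonneg) auto

lemma sym_sum_pos: "(\<And>X. 0 < h X) \<Longrightarrow> 0 < sym_sum h X"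
  unfolding sym_sum_def by (intro sum_pos finite_perms) (auto intro: permutes_id)

lemma le_sym_sum: "(\<And>X. 0 \<le> h X) \<Longrightarrow> h X \<le> sym_sum h X"
  unfolding sym_sum_def
  using member_le_sum[of id perms "\<lambda>\<pi>. h (perm_act \<pi> X)"] finite_perms
  by (simp add: permutes_id perm_act_def)

lemma nn_integral_sym_sum_mult:
  fixes ft :: "('d::finite, 'n::finite) jstate \<Rightarrow> real" and h :: "('d, 'n) jstate \<Rightarrow> ennreal"
  assumes [measurable]: "ft \<in> borel_measurable borel" "h \<in> borel_measurable borel"
    and ft_nonneg: "\<And>X. 0 \<le> ft X"
    and h_sym: "\<And>\<pi> X. \<pi> permutes UNIV \<Longrightarrow> h (perm_act \<pi> X) = h X"
  shows "(\<integral>\<^sup>+X. ennreal (sym_sum ft X) * h X \<partial>lborel)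
       = fact CARD('n) * (\<integral>\<^sup>+X. ennreal (ft X) * h X \<partial>lborel)"
proof -
  have "ennreal (sym_sum ft X) * h X
      = (\<Sum>\<pi>\<in>perms. ennreal (ft (perm_act \<pi> X)) * h (perm_act \<pi> X))" for X
    by (simp add: sym_sum_def ft_nonneg h_sym sum_distrib_right[symmetric])
  then have "(\<integral>\<^sup>+X. ennreal (sym_sum ft X) * h X \<partial>lborel)
      = (\<Sum>\<pi>\<in>perms. \<integral>\<^sup>+X. ennreal (ft (perm_act \<pi> X)) * h (perm_act \<pi> X) \<partial>lborel)"
    by (simp add: nn_integral_sum)
  also have "\<dots> = (\<Sum>\<pi>\<in>(perms :: ('n \<Rightarrow> 'n) set). \<integral>\<^sup>+X. ennreal (ft X) * h X \<partial>lborel)"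
    using nn_integral_perm_act[of _ "\<lambda>X. ennreal (ft X) * h X"] by simp
  finally show ?thesis
    by (simp add: card_perms)
qed

lemma nn_integral_sym_sum:
  fixes h :: "('d::finite, 'n::finite) jstate \<Rightarrow> real"
  assumes "h \<in> borel_measurable borel" "\<And>X. 0 \<le> h X"
  shows "(\<integral>\<^sup>+X. ennreal (sym_sum h X) \<partial>lborel) = fact CARD('n) * (\<integral>\<^sup>+X. ennreal (h X) \<partial>lborel)"
  using nn_integral_sym_sum_mult[of h "\<lambda>_. 1"] assms by simp

lemma ennreal_inverse_fact_mult_fact: "ennreal (1 / fact n) * of_nat (fact n) = 1"
  by (simp add: ennreal_of_nat_eq_real_of_nat ennreal_mult[symmetric])

lemma ennreal_eq_inverse_fact_mult:
  fixes a b :: ennreal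
  assumes "fact n * a = b"
  shows "a = ennreal (1 / fact n) * b"
proof -
  have "ennreal (1 / fact n) * b = (ennreal (1 / fact n) * of_nat (fact n)) * a"
    using assms by (simp add: mult.assoc)
  then show ?thesis
    by (simp only: ennreal_inverse_fact_mult_fact mult_1)
qed

lemma nn_integral_mult_sym_weight:
  fixes ft L :: "('d::finite, 'n::finite) jstate \<Rightarrow> real"
  assumes [measurable]: "ft \<in> borel_measurable borel" "L \<in> borel_measurable borel"
    and ft_nonneg: "\<And>X. 0 \<le> ft X"
    and L_sym: "\<And>\<pi> X. \<pi> permutes UNIV \<Longrightarrow> L (perm_act \<pi> X) = L X"
  shows "(\<integral>\<^sup>+X. ennreal (ft X * L X) \<partial>lborel)
       = ennreal (1 / fact CARD('n)) * (\<integral>\<^sup>+X. ennreal (sym_sum ft X * L X) \<partial>lborel)"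
proof -
  have "fact CARD('n) * (\<integral>\<^sup>+X. ennreal (ft X * L X) \<partial>lborel)
      = (\<integral>\<^sup>+X. ennreal (sym_sum ft X * L X) \<partial>lborel)"
    using nn_integral_sym_sum_mult[of ft "\<lambda>X. ennreal (L X)"]
    by (simp add: ennreal_mult' ft_nonneg sym_sum_nonneg L_sym)
  then show ?thesis
    by (rule ennreal_eq_inverse_fact_mult)
qed

section \<open>Integrals of functions of either sign\<close>

definition signed_nn_integral :: "('a::euclidean_space \<Rightarrow> real) \<Rightarrow> ereal" where
  "signed_nn_integral h =
     enn2ereal (\<integral>\<^sup>+x. ennreal (h x) \<partial>lborel) - enn2ereal (\<integral>\<^sup>+x. ennreal (- h x) \<partial>lborel)"

lemma rel_ent_eq_signed_nn_integral:
  "rel_ent p q = signed_nn_integral (\<lambda>x. p x * ln (p x / q x))"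
  by (simp add: rel_ent_def signed_nn_integral_def)

lemma signed_nn_integral_mult_sym_weight:
  fixes ft L :: "('d::finite, 'n::finite) jstate \<Rightarrow> real"
  assumes "ft \<in> borel_measurable borel" "L \<in> borel_measurable borel" "\<And>X. 0 \<le> ft X"
    and "\<And>\<pi> X. \<pi> permutes UNIV \<Longrightarrow> L (perm_act \<pi> X) = L X"
  shows "signed_nn_integral (\<lambda>X. ft X * L X)
       = ereal (1 / fact CARD('n)) * signed_nn_integral (\<lambda>X. sym_sum ft X * L X)"
proof -
  have c: "ereal c * enn2ereal a - ereal c * enn2ereal b = ereal c * (enn2ereal a - enn2ereal b)"
    if "0 < c" for c :: real and a b :: ennreal
    using that enn2ereal_nonneg[of a] enn2ereal_nonneg[of b]
    by (cases "enn2ereal a"; cases "enn2ereal b") (auto simp: algebra_simps)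
  show ?thesis
    using nn_integral_mult_sym_weight[of ft L] nn_integral_mult_sym_weight[of ft "\<lambda>X. - L X"] assms
    by (simp add: signed_nn_integral_def times_ennreal.rep_eq c)
qed

lemma ennreal_pos_neg_parts_le:
  fixes a b c d :: real
  assumes "c - d \<le> a - b" "0 \<le> c" "0 \<le> d"
  shows "ennreal (- a) + ennreal b + ennreal c \<le> ennreal a + ennreal (- b) + ennreal d"
proof -
  have max0: "ennreal x = ennreal (max x 0)" for x
    by (cases "0 \<le> x") (auto simp: ennreal_neg max_def)
  have "ennreal (- a) + ennreal b + ennreal c = ennreal (max (- a) 0 + max b 0 + c)"
    by (subst max0[of "- a"], subst max0[of b]) (simp add: assms)
  also have "\<dots> \<le> ennreal (max a 0 + max (- b) 0 + d)"
    using assms by (intro ennreal_leI) (auto simp: max_def)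
  also have "\<dots> = ennreal a + ennreal (- b) + ennreal d"
    by (subst max0[of a], subst max0[of "- b"]) (simp add: assms)
  finally show ?thesis .
qed

lemma enn2ereal_diff_le_diff:
  fixes a1 a2 b1 b2 :: ennreal
  assumes "a2 + b1 \<le> a1 + b2" "a2 < \<infinity>" "b2 < \<infinity>"
  shows "enn2ereal b1 - enn2ereal b2 \<le> enn2ereal a1 - enn2ereal a2"
proof -
  have "enn2ereal a2 + enn2ereal b1 \<le> enn2ereal a1 + enn2ereal b2"
    using assms(1) by (simp add: plus_ennreal.rep_eq[symmetric] less_eq_ennreal.rep_eq[symmetric])
  moreover have "enn2ereal a2 \<noteq> \<infinity>" "enn2ereal b2 \<noteq> \<infinity>"
    using assms(2,3) by (auto simp: less_top[symmetric] enn2ereal_eq_top_iff)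
  ultimately show ?thesis
    using enn2ereal_nonneg[of a1] enn2ereal_nonneg[of a2] enn2ereal_nonneg[of b1] enn2ereal_nonneg[of b2]
    by (cases "enn2ereal a1"; cases "enn2ereal a2"; cases "enn2ereal b1"; cases "enn2ereal b2") auto
qed

lemma signed_nn_integral_mono_balanced:
  fixes u v c d :: "'a::euclidean_space \<Rightarrow> real"
  assumes [measurable]: "u \<in> borel_measurable borel" "v \<in> borel_measurable borel"
      "c \<in> borel_measurable borel" "d \<in> borel_measurable borel"
    and "\<And>x. 0 \<le> c x" "\<And>x. 0 \<le> d x" "\<And>x. v x + c x \<le> u x + d x"
    and cd: "(\<integral>\<^sup>+x. ennreal (c x) \<partial>lborel) = (\<integral>\<^sup>+x. ennreal (d x) \<partial>lborel)"
      "(\<integral>\<^sup>+x. ennreal (d x) \<partial>lborel) < \<infinity>"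
    and "(\<integral>\<^sup>+x. ennreal (- u x) \<partial>lborel) < \<infinity>" "(\<integral>\<^sup>+x. ennreal (- v x) \<partial>lborel) < \<infinity>"
  shows "signed_nn_integral v \<le> signed_nn_integral u"
proof -
  let ?I = "\<lambda>h. \<integral>\<^sup>+x. ennreal (h x) \<partial>lborel"
  have "(\<integral>\<^sup>+x. ennreal (- u x) + ennreal (v x) + ennreal (c x) \<partial>lborel)
      \<le> (\<integral>\<^sup>+x. ennreal (u x) + ennreal (- v x) + ennreal (d x) \<partial>lborel)"
    using assms by (intro nn_integral_mono ennreal_pos_neg_parts_le) (auto simp: algebra_simps)
  then have "?I (\<lambda>x. - u x) + ?I v + ?I d \<le> ?I u + ?I (\<lambda>x. - v x) + ?I d"
    by (simp add: nn_integral_add cd(1))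
  then have "?I (\<lambda>x. - u x) + ?I v \<le> ?I u + ?I (\<lambda>x. - v x)"
    using cd(2) by (auto simp: add.commute[of _ "?I d"] add.assoc ennreal_add_left_cancel_le)
  then show ?thesis
    unfolding signed_nn_integral_def using assms by (intro enn2ereal_diff_le_diff) auto
qed

lemma diff_le_mult_ln_div:
  fixes p q :: real
  assumes "0 \<le> p" "0 < q"
  shows "p - q \<le> p * ln (p / q)"
proof (cases "p = 0")
  case False
  then have p: "0 < p" using assms by simp
  have "ln (q / p) \<le> q / p - 1" using p assms by (intro ln_le_minus_one) simp
  moreover have "ln (p / q) = - ln (q / p)" using p assms by (simp add: ln_div)
  ultimately have "p * (1 - q / p) \<le> p * ln (p / q)" using p by (intro mult_left_mono) auto
  then show ?thesis using p by (simp add: algebra_simps)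
qed (use assms in simp)

lemma neg_mult_ln_div_le: "0 \<le> p \<Longrightarrow> 0 < q \<Longrightarrow> - (p * ln (p / q)) \<le> q"
  for p q :: real
  using diff_le_mult_ln_div[of p q] by simp

section \<open>Integrability of Gaussian densities\<close>

lemma cov_matrix_invertible:
  assumes "cov_matrix S"
  shows "invertible S"
proof -
  have "\<forall>x. S *v x = 0 \<longrightarrow> x = 0"
    using assms unfolding cov_matrix_def by (metis inner_zero_right less_irrefl)
  then show ?thesis
    using matrix_left_invertible_ker invertible_left_inverse by blast
qed

lemma cov_matrix_det_nonzero: "cov_matrix S \<Longrightarrow> det S \<noteq> 0"
  using cov_matrix_invertible invertible_det_nz by blast

lemma cov_matrix_inverse_pos:
  assumes S: "cov_matrix S" and v: "v \<noteq> 0"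
  shows "0 < v \<bullet> (matrix_inv S *v v)"
proof -
  define w where "w = matrix_inv S *v v"
  have "S ** matrix_inv S = mat 1"
    using cov_matrix_invertible[OF S] unfolding invertible_def matrix_inv_def by (rule someI_ex[THEN conjunct1])
  then have vw: "v = S *v w"
    by (simp add: w_def matrix_vector_mul_assoc)
  then have "w \<noteq> 0"
    using v by auto
  then have "0 < w \<bullet> (S *v w)"
    using S unfolding cov_matrix_def by auto
  moreover have "v \<bullet> (matrix_inv S *v v) = w \<bullet> (S *v w)"
    unfolding w_def[symmetric] by (subst (1) vw) (simp add: inner_commute)
  ultimately show ?thesis
    by simp
qed

lemma pos_def_quadratic_form_ge:
  fixes A :: "real ^ 'm::finite ^ 'm"
  assumes pd: "\<And>v. v \<noteq> 0 \<Longrightarrow> 0 < v \<bullet> (A *v v)"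
  obtains c where "0 < c" "\<And>v. c * (norm v)\<^sup>2 \<le> v \<bullet> (A *v v)"
proof -
  let ?q = "\<lambda>v. v \<bullet> (A *v v)"
  have "continuous_on (sphere 0 1) ?q" by (intro continuous_intros)
  then obtain x0 where x0: "x0 \<in> sphere 0 1" and min: "\<And>y. y \<in> sphere 0 1 \<Longrightarrow> ?q x0 \<le> ?q y"
    using continuous_attains_inf[of "sphere (0::real^'m) 1" ?q] by auto
  have "?q x0 * (norm v)\<^sup>2 \<le> ?q v" for v
  proof (cases "v = 0")
    case False
    define u where "u = (1 / norm v) *\<^sub>R v"
    have u: "u \<in> sphere 0 1" using False by (simp add: u_def)
    have vu: "v = norm v *\<^sub>R u" using False by (simp add: u_def)
    have "?q v = (norm v)\<^sup>2 * ?q u"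
      by (subst (1 2) vu) (simp add: matrix_vector_mult_scaleR power2_eq_square)
    then show ?thesis
      using min[OF u] by (simp add: mult.commute[of "(norm v)\<^sup>2"] mult_right_mono)
  qed simp
  moreover have "0 < ?q x0"
    using x0 by (intro pd) auto
  ultimately show ?thesis using that by blast
qed

lemma nn_integral_exp_neg_sq_finite:
  assumes a: "0 < (a::real)"
  shows "(\<integral>\<^sup>+t. ennreal (exp (- a * t\<^sup>2)) \<partial>lborel) < \<infinity>"
proof -
  define \<sigma> where "\<sigma> = sqrt (1 / (2 * a))"
  have \<sigma>: "0 < \<sigma>" "\<sigma>\<^sup>2 = 1 / (2 * a)" using a by (simp_all add: \<sigma>_def)
  have "exp (- a * t\<^sup>2) = sqrt (2 * pi * \<sigma>\<^sup>2) * normal_density 0 \<sigma> t" for t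
    using a by (simp add: normal_density_def \<sigma> field_simps)
  then have "(\<integral>\<^sup>+t. ennreal (exp (- a * t\<^sup>2)) \<partial>lborel)
      = ennreal (sqrt (2 * pi * \<sigma>\<^sup>2)) * (\<integral>\<^sup>+t. ennreal (normal_density 0 \<sigma> t) \<partial>lborel)"
    by (simp add: ennreal_mult nn_integral_cmult)
  also have "(\<integral>\<^sup>+t. ennreal (normal_density 0 \<sigma> t) \<partial>lborel) = 1"
    using \<sigma> by (subst nn_integral_eq_integral)
      (auto intro: integrable_normal_density simp: integral_normal_density)
  finally show ?thesis by simp
qed

lemma nn_integral_exp_neg_norm_sq_finite:
  assumes a: "0 < (a::real)"
  shows "(\<integral>\<^sup>+x. ennreal (exp (- a * (norm (x::'e::euclidean_space))\<^sup>2)) \<partial>lborel) < \<infinity>"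
proof -
  have "exp (- a * (norm x)\<^sup>2) = (\<Prod>b\<in>Basis. exp (- a * (x \<bullet> b)\<^sup>2))" for x :: 'e
  proof -
    have "(norm x)\<^sup>2 = (\<Sum>b\<in>Basis. (x \<bullet> b)\<^sup>2)"
      unfolding power2_norm_eq_inner by (subst euclidean_inner) (simp add: power2_eq_square)
    then show ?thesis
      by (simp add: sum_distrib_left exp_sum[symmetric])
  qed
  then have "(\<integral>\<^sup>+x. ennreal (exp (- a * (norm (x::'e))\<^sup>2)) \<partial>lborel)
      = (\<Prod>b\<in>(Basis::'e set). \<integral>\<^sup>+t. ennreal (exp (- a * t\<^sup>2)) \<partial>lborel)"
    using nn_integral_lborel_prod[of "\<lambda>b t. ennreal (exp (- a * t\<^sup>2))"]
    by (simp add: prod_ennreal)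
  also have "\<dots> < \<infinity>"
    using nn_integral_exp_neg_sq_finite[OF a] by (simp add: power_less_top_ennreal)
  finally show ?thesis .
qed

lemma continuous_on_matrix_vector_mult [continuous_intros]:
  "continuous_on s g \<Longrightarrow> continuous_on s (\<lambda>x. (A::real^'a::finite^'b::finite) *v g x)"
  by (rule continuous_on_compose2[OF matrix_vector_mult_linear_continuous_on]) auto

lemma borel_measurable_gauss_density [measurable]: "gauss_density \<mu> S \<in> borel_measurable borel"
  unfolding gauss_density_def[abs_def]
  by (intro borel_measurable_continuous_onI continuous_intros)

lemma gauss_density_pos: "cov_matrix S \<Longrightarrow> 0 < gauss_density \<mu> S x"
  by (simp add: gauss_density_def cov_matrix_det_nonzero)

lemma nn_integral_gauss_density_finite:
  fixes \<mu> :: "real ^ 'm::finite"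
  assumes S: "cov_matrix S"
  shows "(\<integral>\<^sup>+x. ennreal (gauss_density \<mu> S x) \<partial>lborel) < \<infinity>"
proof -
  obtain c where c: "0 < c" and quad: "\<And>v. c * (norm v)\<^sup>2 \<le> v \<bullet> (matrix_inv S *v v)"
    using pos_def_quadratic_form_ge cov_matrix_inverse_pos[OF S] by blast
  define K where "K = (2 * pi) powr (- real CARD('m) / 2) * det S powr (- 1 / 2)"
  define u where "u x = ennreal (exp (- (c / 2) * (norm x)\<^sup>2))" for x :: "real ^ 'm"
  have [measurable]: "u \<in> borel_measurable borel" unfolding u_def[abs_def] by measurable
  have K: "0 < K" using cov_matrix_det_nonzero[OF S] by (simp add: K_def)
  have "ennreal (gauss_density \<mu> S x) \<le> ennreal K * u (x - \<mu>)" for x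
  proof -
    have "- (1 / 2) * ((x - \<mu>) \<bullet> (matrix_inv S *v (x - \<mu>))) \<le> - (c / 2) * (norm (x - \<mu>))\<^sup>2"
      using quad[of "x - \<mu>"] by simp
    then have "gauss_density \<mu> S x \<le> K * exp (- (c / 2) * (norm (x - \<mu>))\<^sup>2)"
      unfolding gauss_density_def K_def[symmetric] using K by (intro mult_left_mono) auto
    then show ?thesis
      using K by (simp add: u_def ennreal_mult[symmetric] ennreal_leI)
  qed
  then have "(\<integral>\<^sup>+x. ennreal (gauss_density \<mu> S x) \<partial>lborel) \<le> ennreal K * (\<integral>\<^sup>+x. u (x - \<mu>) \<partial>lborel)"
    by (simp add: nn_integral_mono nn_integral_cmult[symmetric])
  also have "(\<integral>\<^sup>+x. u (x - \<mu>) \<partial>lborel) = (\<integral>\<^sup>+x. u (x - \<mu>) \<partial>distr lborel borel ((+) \<mu>))"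
    by (simp add: lborel_distr_plus)
  also have "\<dots> = (\<integral>\<^sup>+x. u x \<partial>lborel)"
    by (subst nn_integral_distr) auto
  also have "ennreal K * \<dots> < \<infinity>"
    using nn_integral_exp_neg_norm_sq_finite[of "c / 2", where 'e = "real ^ 'm"] c
    by (simp add: u_def ennreal_mult_less_top)
  finally show ?thesis .
qed

section \<open>The constrained minimisation\<close>

definition kl_minimizer ::
  "(('d::finite, 'n::finite) jstate \<Rightarrow> real) \<Rightarrow> (('d, 'n) jstate \<Rightarrow> real) \<Rightarrow> ('d, 'n) jstate \<Rightarrow> real"
  where "kl_minimizer f G X = sym_sum f X * G X / sym_sum G X"

lemma borel_measurable_kl_minimizer [measurable]:
  assumes [measurable]: "f \<in> borel_measurable borel" "G \<in> borel_measurable borel"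
  shows "kl_minimizer f G \<in> borel_measurable borel"
  unfolding kl_minimizer_def[abs_def] by measurable

context
  fixes f G :: "('d::finite, 'n::finite) jstate \<Rightarrow> real"
  assumes f: "prob_density f"
    and G_meas [measurable]: "G \<in> borel_measurable borel"
    and G_pos: "\<And>X. 0 < G X"
    and G_finite: "(\<integral>\<^sup>+X. ennreal (G X) \<partial>lborel) < \<infinity>"
begin

lemma
  shows f_meas [measurable]: "f \<in> borel_measurable borel"
    and f_nonneg: "0 \<le> f X"
    and f_integral: "(\<integral>\<^sup>+X. ennreal (f X) \<partial>lborel) = 1"
  using f by (auto simp: prob_density_def)

lemma sym_sum_f_nonneg: "0 \<le> sym_sum f X"
  using sym_sum_nonneg f_nonneg by blast

lemma sym_sum_G_pos: "0 < sym_sum G X"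
  using sym_sum_pos G_pos by blast

lemma kl_minimizer_nonneg: "0 \<le> kl_minimizer f G X"
  unfolding kl_minimizer_def
  by (intro divide_nonneg_pos mult_nonneg_nonneg sym_sum_nonneg f_nonneg less_imp_le G_pos sym_sum_G_pos)

lemma sym_sum_kl_minimizer: "sym_sum (kl_minimizer f G) X = sym_sum f X"
proof -
  have "sym_sum (kl_minimizer f G) X = sym_sum f X / sym_sum G X * sym_sum G X"
    unfolding sym_sum_def[of "kl_minimizer f G"]
    by (simp add: kl_minimizer_def sym_sum_perm_act sum_distrib_left sym_sum_def[of G X])
  then show ?thesis
    using sym_sum_G_pos[of X] by simp
qed

lemma kl_minimizer_feasible: "feasible f (kl_minimizer f G)"
proof -
  have "fact CARD('n) * (\<integral>\<^sup>+X. ennreal (kl_minimizer f G X) \<partial>lborel)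
      = (\<integral>\<^sup>+X. ennreal (sym_sum f X) \<partial>lborel)"
    using nn_integral_sym_sum[of "kl_minimizer f G"] kl_minimizer_nonneg
    by (simp add: sym_sum_kl_minimizer)
  also have "\<dots> = fact CARD('n) * 1"
    using nn_integral_sym_sum[of f] f_nonneg by (simp add: f_integral)
  finally have "(\<integral>\<^sup>+X. ennreal (kl_minimizer f G X) \<partial>lborel) = 1"
    by (metis ennreal_eq_inverse_fact_mult ennreal_inverse_fact_mult_fact mult_1_right of_nat_fact)
  then show ?thesis
    by (simp add: feasible_def prob_density_def kl_minimizer_nonneg sym_sum_kl_minimizer)
qed

lemma signed_nn_integral_feasible_ln_sym:
  assumes "feasible f ft"
  shows "signed_nn_integral (\<lambda>X. ft X * ln (sym_sum f X / sym_sum G X))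
       = ereal (1 / fact CARD('n)) * rel_ent (sym_sum f) (sym_sum G)"
  using assms signed_nn_integral_mult_sym_weight[of ft "\<lambda>X. ln (sym_sum f X / sym_sum G X)"]
  by (simp add: feasible_def prob_density_def sym_sum_perm_act rel_ent_eq_signed_nn_integral)

lemma rel_ent_kl_minimizer:
  "rel_ent (kl_minimizer f G) G = ereal (1 / fact CARD('n)) * rel_ent (sym_sum f) (sym_sum G)"
proof -
  have "kl_minimizer f G X / G X = sym_sum f X / sym_sum G X" for X
    using G_pos[of X] sym_sum_G_pos[of X] by (simp add: kl_minimizer_def)
  then show ?thesis
    using signed_nn_integral_feasible_ln_sym[OF kl_minimizer_feasible]
    by (simp add: rel_ent_eq_signed_nn_integral)
qed

lemma feasible_mult_ln_le:
  assumes "feasible f ft"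
  shows "ft X * ln (sym_sum f X / sym_sum G X) + ft X \<le> ft X * ln (ft X / G X) + kl_minimizer f G X"
proof (cases "ft X = 0")
  case False
  have ft_nonneg: "0 \<le> ft X" and "ft X \<le> sym_sum f X"
    using assms le_sym_sum[of ft] by (auto simp: feasible_def prob_density_def)
  then have F_pos: "0 < sym_sum f X"
    using False by simp
  then have "ft X * ln (ft X / G X)
      = ft X * ln (sym_sum f X / sym_sum G X) + ft X * ln (ft X / kl_minimizer f G X)"
    using False ft_nonneg G_pos[of X] sym_sum_G_pos[of X]
    by (simp add: kl_minimizer_def ln_div ln_mult distrib_left[symmetric])
  moreover have "0 < kl_minimizer f G X"
    using F_pos G_pos[of X] sym_sum_G_pos[of X] by (simp add: kl_minimizer_def)
  ultimately show ?thesis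
    using diff_le_mult_ln_div[OF ft_nonneg, of "kl_minimizer f G X"] by linarith
qed (simp add: kl_minimizer_nonneg)

lemma nn_integral_neg_feasible_ln_sym_finite:
  assumes "feasible f ft"
  shows "(\<integral>\<^sup>+X. ennreal (- (ft X * ln (sym_sum f X / sym_sum G X))) \<partial>lborel) < \<infinity>"
proof -
  let ?L = "\<lambda>X. ln (sym_sum f X / sym_sum G X)"
  have "(\<integral>\<^sup>+X. ennreal (- (sym_sum f X * ?L X)) \<partial>lborel) \<le> (\<integral>\<^sup>+X. ennreal (sym_sum G X) \<partial>lborel)"
    by (intro nn_integral_mono ennreal_leI neg_mult_ln_div_le sym_sum_f_nonneg sym_sum_G_pos)
  also have "\<dots> < \<infinity>"
    using nn_integral_sym_sum[of G] G_pos G_finite of_nat_less_top[of "fact CARD('n)"]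
    by (simp add: less_imp_le ennreal_mult_less_top)
  finally show ?thesis
    using assms nn_integral_mult_sym_weight[of ft "\<lambda>X. - ?L X"]
    by (simp add: feasible_def prob_density_def sym_sum_perm_act ennreal_mult_less_top)
qed

lemma rel_ent_feasible_ge:
  assumes "feasible f ft"
  shows "ereal (1 / fact CARD('n)) * rel_ent (sym_sum f) (sym_sum G) \<le> rel_ent ft G"
proof -
  have [measurable]: "ft \<in> borel_measurable borel" and ft_nonneg: "\<And>X. 0 \<le> ft X"
    and ft_integral: "(\<integral>\<^sup>+X. ennreal (ft X) \<partial>lborel) = 1"
    using assms by (auto simp: feasible_def prob_density_def)
  have "(\<integral>\<^sup>+X. ennreal (- (ft X * ln (ft X / G X))) \<partial>lborel) < \<infinity>"
    by (intro le_less_trans[OF nn_integral_mono G_finite] ennreal_leI neg_mult_ln_div_le ft_nonneg G_pos)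
  then have "signed_nn_integral (\<lambda>X. ft X * ln (sym_sum f X / sym_sum G X))
      \<le> signed_nn_integral (\<lambda>X. ft X * ln (ft X / G X))"
    using feasible_mult_ln_le[OF assms] nn_integral_neg_feasible_ln_sym_finite[OF assms]
      ft_nonneg kl_minimizer_nonneg kl_minimizer_feasible ft_integral
    by (intro signed_nn_integral_mono_balanced[where c = ft and d = "kl_minimizer f G"])
      (auto simp: feasible_def prob_density_def)
  then show ?thesis
    using signed_nn_integral_feasible_ln_sym[OF assms] by (simp add: rel_ent_eq_signed_nn_integral)
qed

lemma INF_rel_ent_feasible:
  "(INF ft \<in> {ft. feasible f ft}. rel_ent ft G) = ereal (1 / fact CARD('n)) * rel_ent (sym_sum f) (sym_sum G)"
  using kl_minimizer_feasible rel_ent_kl_minimizer rel_ent_feasible_ge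
  by (intro antisym INF_greatest INF_lower2[of "kl_minimizer f G"]) auto

end

theorem theorem7:
  fixes f :: "('d::finite, 'n::finite) jstate \<Rightarrow> real"
    and \<mu> :: "('d, 'n) jstate"
    and S :: "real ^ ('d \<times> 'n) ^ ('d \<times> 'n)"
  assumes f: "prob_density f"
    and S: "cov_matrix S"
  shows "(\<exists>ft. feasible f ft \<and>
            rel_ent ft (gauss_density \<mu> S)
              = ereal (1 / fact CARD('n)) * rel_ent (sym_sum f) (sym_sum (gauss_density \<mu> S)))
       \<and> (\<forall>ft. feasible f ft \<longrightarrow>
            ereal (1 / fact CARD('n)) * rel_ent (sym_sum f) (sym_sum (gauss_density \<mu> S))
              \<le> rel_ent ft (gauss_density \<mu> S))
       \<and> (INF p \<in> {(ft, m, C). feasible f ft \<and> cov_matrix C}.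
            rel_ent (fst p) (gauss_density (fst (snd p)) (snd (snd p))))
         = (INF q \<in> {(m, C). cov_matrix C}.
            ereal (1 / fact CARD('n)) * rel_ent (sym_sum f) (sym_sum (gauss_density (fst q) (snd q))))"
proof -
  note gauss = borel_measurable_gauss_density gauss_density_pos nn_integral_gauss_density_finite
  let ?R = "\<lambda>ft q. rel_ent ft (gauss_density (fst q) (snd q))"
  have "{(ft, m, C). feasible f ft \<and> cov_matrix C} = {ft. feasible f ft} \<times> {(m, C). cov_matrix C}"
    by auto
  then have "(INF p \<in> {(ft, m, C). feasible f ft \<and> cov_matrix C}.
            rel_ent (fst p) (gauss_density (fst (snd p)) (snd (snd p))))
      = (INF ft \<in> {ft. feasible f ft}. INF q \<in> {(m, C). cov_matrix C}. ?R ft q)"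
    by (simp add: INF_pair[of ?R])
  also have "\<dots> = (INF q \<in> {(m, C). cov_matrix C}. INF ft \<in> {ft. feasible f ft}. ?R ft q)"
    by (rule INF_commute)
  also have "\<dots> = (INF q \<in> {(m, C). cov_matrix C}.
            ereal (1 / fact CARD('n)) * rel_ent (sym_sum f) (sym_sum (gauss_density (fst q) (snd q))))"
    using INF_rel_ent_feasible[OF f gauss] by (intro INF_cong) auto
  finally show ?thesis
    using kl_minimizer_feasible[OF f gauss] rel_ent_kl_minimizer[OF f gauss]
      rel_ent_feasible_ge[OF f gauss] S by blast
qed

end
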